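(* Let $G$ be a map graph with a corresponding planar bipartite graph $B$, let $\mathcal{D}=(T,\beta_{\mathcal{D}})$ be a nice tree decomposition of $B$, and let $\mathcal{D}'=(T,\beta_{\mathcal{D}'})$ be derived from $\mathcal{D}$ as described in the context. Then for every node $t\in V(T)$, every edge of $G$ with one endpoint in $\gamma_{\mathcal{D}'}(t)$ and the other endpoint in $V(G)\setminus\gamma_{\mathcal{D}'}(t)$ either is incident with a vertex of $\mathsf{Original}(t)$, or belongs to $E(K)$ (the edge set of the clique $K$) for some special clique $K\in\mathsf{Cliques}(t)$.
   Context: All graphs are finite and simple. For a bipartite graph $B$ with bipartition $V(B)=W\uplus U$, the half-square of $B$ is the graph on $W$ in which two vertices are adjacent iff they are at distance exactly $2$ in $B$. A graph $G$ is a map graph iff it is the half-square of some planar bipartite graph $B$; such $B$ (with $W=V(G)$) is a corresponding planar bipartite graph, and $S(G)=U$ is the set of special vertices; for $s\in S(G)$, $N_B(s)$ is a clique of $G$ called a special clique. A tree decomposition $(T,\beta)$: rooted tree, bags covering all vertices and edges, each vertex's nodes inducing a connected subtree. $\gamma_{\mathcal{D}}(t)$ (resp. $\gamma_{\mathcal{D}'}(t)$) is the union of bags of $\mathcal{D}$ (resp. $\mathcal{D}'$) at $t$ and its descendants. A nice tree decomposition has empty root bag and leaf, introduce, forget and join nodes in the standard sense. The derived decomposition $\mathcal{D}'$ has the same tree and $\beta_{\mathcal{D}'}(t)=(\beta_{\mathcal{D}}(t)\cap V(G))\cup\bigcup_{s\in\beta_{\mathcal{D}}(t)\cap S(G)}(N_B(s)\cap\gamma_{\mathcal{D}}(t))$.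 $\mathsf{Original}(t)=\beta_{\mathcal{D}}(t)\cap\beta_{\mathcal{D}'}(t)$, $\mathsf{Fake}(t)=\beta_{\mathcal{D}'}(t)\setminus\beta_{\mathcal{D}}(t)$, $\mathsf{Cliques}(t)=\{N_B(s): s\in S(G)\cap\beta_{\mathcal{D}}(t)\}$. *)

theory Defs
  imports "HOL-Analysis.Analysis"
begin

definition simple_graph :: "'v set \<Rightarrow> 'v set set \<Rightarrow> bool" where
  "simple_graph V E \<longleftrightarrow> finite V \<and>
     (\<forall>e\<in>E. \<exists>u v. e = {u, v} \<and> u \<in> V \<and> v \<in> V \<and> u \<noteq> v)"

definition nbhd :: "'v set set \<Rightarrow> 'v \<Rightarrow> 'v set" where
  "nbhd E s = {x. {s, x} \<in> E}"

definition planar_graph :: "'v set \<Rightarrow> 'v set set \<Rightarrow> bool" where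
  "planar_graph V E \<longleftrightarrow>
    (\<exists>(pos :: 'v \<Rightarrow> real \<times> real) (arcs :: 'v set \<Rightarrow> real \<Rightarrow> real \<times> real).
       inj_on pos V \<and>
       (\<forall>e\<in>E. arc (arcs e) \<and>
          (\<exists>u v. e = {u, v} \<and> pathstart (arcs e) = pos u \<and> pathfinish (arcs e) = pos v)) \<and>
       (\<forall>e\<in>E. \<forall>w\<in>V. pos w \<in> path_image (arcs e) \<longrightarrow> w \<in> e) \<and>
       (\<forall>e\<in>E. \<forall>f\<in>E. e \<noteq> f \<longrightarrow>
          path_image (arcs e) \<inter> path_image (arcs f) \<subseteq> pos ` (e \<inter> f)))"

definition bipartite_graph :: "'v set \<Rightarrow> 'v set \<Rightarrow> 'v set set \<Rightarrow> bool" where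
  "bipartite_graph W U EB \<longleftrightarrow> simple_graph (W \<union> U) EB \<and> W \<inter> U = {} \<and>
     (\<forall>e\<in>EB. \<exists>w u. e = {w, u} \<and> w \<in> W \<and> u \<in> U)"

text \<open>Edges of the half-square of B on W: pairs of vertices of W at distance exactly 2 in B.\<close>
definition half_square_edges :: "'v set \<Rightarrow> 'v set set \<Rightarrow> 'v set set" where
  "half_square_edges W EB =
     {{x, y} | x y. x \<in> W \<and> y \<in> W \<and> x \<noteq> y \<and> {x, y} \<notin> EB \<and>
                   (\<exists>s. {x, s} \<in> EB \<and> {s, y} \<in> EB)}"

definition rooted_tree :: "'n set \<Rightarrow> 'n \<Rightarrow> ('n \<Rightarrow> 'n) \<Rightarrow> bool" where
  "rooted_tree N r par \<longleftrightarrow> finite N \<and> r \<in> N \<and> par r = r \<and>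
     (\<forall>t\<in>N. par t \<in> N \<and> (\<exists>k. (par ^^ k) t = r))"

definition tree_adj :: "('n \<Rightarrow> 'n) \<Rightarrow> 'n \<Rightarrow> 'n \<Rightarrow> bool" where
  "tree_adj par s t \<longleftrightarrow> s \<noteq> t \<and> (par s = t \<or> par t = s)"

definition children :: "'n set \<Rightarrow> 'n \<Rightarrow> ('n \<Rightarrow> 'n) \<Rightarrow> 'n \<Rightarrow> 'n set" where
  "children N r par t = {c \<in> N. c \<noteq> r \<and> par c = t}"

text \<open>Descendants of t, including t itself.\<close>
definition descendants :: "'n set \<Rightarrow> ('n \<Rightarrow> 'n) \<Rightarrow> 'n \<Rightarrow> 'n set" where
  "descendants N par t = {s \<in> N. \<exists>k. (par ^^ k) s = t}"

definition connected_in_tree :: "('n \<Rightarrow> 'n) \<Rightarrow> 'n set \<Rightarrow> bool" where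
  "connected_in_tree par X \<longleftrightarrow> X \<noteq> {} \<and>
     (\<forall>s\<in>X. \<forall>t\<in>X. (s, t) \<in> {(a, b). a \<in> X \<and> b \<in> X \<and> tree_adj par a b}\<^sup>*)"

definition tree_decomposition ::
  "'v set \<Rightarrow> 'v set set \<Rightarrow> 'n set \<Rightarrow> 'n \<Rightarrow> ('n \<Rightarrow> 'n) \<Rightarrow> ('n \<Rightarrow> 'v set) \<Rightarrow> bool" where
  "tree_decomposition V E N r par \<beta> \<longleftrightarrow> rooted_tree N r par \<and>
     (\<forall>t\<in>N. \<beta> t \<subseteq> V) \<and>
     (\<forall>v\<in>V. \<exists>t\<in>N. v \<in> \<beta> t) \<and>
     (\<forall>e\<in>E. \<exists>t\<in>N. e \<subseteq> \<beta> t) \<and>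
     (\<forall>v\<in>V. connected_in_tree par {t \<in> N. v \<in> \<beta> t})"

text \<open>Nice tree decomposition: empty root bag; every node is a leaf (no children,
empty bag), an introduce node, a forget node, or a join node.\<close>
definition nice_tree_decomposition ::
  "'v set \<Rightarrow> 'v set set \<Rightarrow> 'n set \<Rightarrow> 'n \<Rightarrow> ('n \<Rightarrow> 'n) \<Rightarrow> ('n \<Rightarrow> 'v set) \<Rightarrow> bool" where
  "nice_tree_decomposition V E N r par \<beta> \<longleftrightarrow> tree_decomposition V E N r par \<beta> \<and>
     \<beta> r = {} \<and>
     (\<forall>t\<in>N.
        (children N r par t = {} \<and> \<beta> t = {}) \<or>
        (\<exists>c v. children N r par t = {c} \<and> v \<notin> \<beta> c \<and> \<beta> t = insert v (\<beta> c)) \<or>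
        (\<exists>c w. children N r par t = {c} \<and> w \<in> \<beta> c \<and> \<beta> t = \<beta> c - {w}) \<or>
        (\<exists>c1 c2. c1 \<noteq> c2 \<and> children N r par t = {c1, c2} \<and>
                 \<beta> t = \<beta> c1 \<and> \<beta> t = \<beta> c2))"

definition gamma :: "'n set \<Rightarrow> ('n \<Rightarrow> 'n) \<Rightarrow> ('n \<Rightarrow> 'v set) \<Rightarrow> 'n \<Rightarrow> 'v set" where
  "gamma N par \<beta> t = (\<Union>s\<in>descendants N par t. \<beta> s)"

text \<open>The derived decomposition D' (W = V(G), U = S(G)).\<close>
definition derived_bag ::
  "'v set \<Rightarrow> 'v set \<Rightarrow> 'v set set \<Rightarrow> 'n set \<Rightarrow> ('n \<Rightarrow> 'n) \<Rightarrow> ('n \<Rightarrow> 'v set) \<Rightarrow> 'n \<Rightarrow> 'v set" where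
  "derived_bag W U EB N par \<beta> t =
     (\<beta> t \<inter> W) \<union> (\<Union>s\<in>\<beta> t \<inter> U. nbhd EB s \<inter> gamma N par \<beta> t)"

definition Original ::
  "'v set \<Rightarrow> 'v set \<Rightarrow> 'v set set \<Rightarrow> 'n set \<Rightarrow> ('n \<Rightarrow> 'n) \<Rightarrow> ('n \<Rightarrow> 'v set) \<Rightarrow> 'n \<Rightarrow> 'v set" where
  "Original W U EB N par \<beta> t = \<beta> t \<inter> derived_bag W U EB N par \<beta> t"

definition Fake ::
  "'v set \<Rightarrow> 'v set \<Rightarrow> 'v set set \<Rightarrow> 'n set \<Rightarrow> ('n \<Rightarrow> 'n) \<Rightarrow> ('n \<Rightarrow> 'v set) \<Rightarrow> 'n \<Rightarrow> 'v set" where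
  "Fake W U EB N par \<beta> t = derived_bag W U EB N par \<beta> t - \<beta> t"

definition Cliques :: "'v set \<Rightarrow> 'v set set \<Rightarrow> ('n \<Rightarrow> 'v set) \<Rightarrow> 'n \<Rightarrow> 'v set set" where
  "Cliques U EB \<beta> t = {nbhd EB s | s. s \<in> U \<and> s \<in> \<beta> t}"

definition clique_edges :: "'v set set \<Rightarrow> 'v set \<Rightarrow> 'v set set" where
  "clique_edges EG K = {e \<in> EG. e \<subseteq> K}"

end

theory Submission
  imports Defs
begin

text \<open>Let xy be an edge of G that leaves gamma_D'(t), and let u be a special vertex adjacent
to both x and y in B. Since y lies outside gamma_D'(t), it lies in no bag of the subtree
T_t below t; the edge uy of B therefore sits in a bag outside T_t. In a tree decomposition
every vertex occurring both inside and outside T_t occurs in the bag of t. So if u occurs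
inside T_t, then u is in the bag of t and xy is an edge of the special clique N_B(u).
Otherwise the bag containing the edge xu is outside T_t, while x occurs inside T_t, so x is
in the bag of t and hence in Original(t).\<close>

lemma descendants_refl: "t \<in> N \<Longrightarrow> t \<in> descendants N par t"
  unfolding descendants_def by (metis (mono_tags, lifting) funpow_0 mem_Collect_eq)

lemma descendants_trans:
  assumes "s \<in> descendants N par t" "s' \<in> descendants N par s"
  shows "s' \<in> descendants N par t"
proof -
  obtain k where k: "(par ^^ k) s = t" using assms(1) unfolding descendants_def by auto
  obtain j where j: "(par ^^ j) s' = s" "s' \<in> N" using assms(2) unfolding descendants_def by auto
  have "(par ^^ (k + j)) s' = t" using k j by (simp add: funpow_add)
  then show ?thesis using j unfolding descendants_def by auto
qed

lemma tree_adj_leaving_descendants: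
  assumes adj: "tree_adj par a b"
    and a: "a \<in> descendants N par t" and b: "b \<in> N" "b \<notin> descendants N par t"
  shows "a = t"
proof -
  obtain k where k: "(par ^^ k) a = t" using a unfolding descendants_def by auto
  have "par b \<noteq> a"
  proof
    assume "par b = a"
    then have "(par ^^ Suc k) b = t" using k by (simp only: funpow_Suc_right o_apply)
    then show False using b unfolding descendants_def by blast
  qed
  then have par_a: "par a = b" using adj unfolding tree_adj_def by auto
  show "a = t"
  proof (cases k)
    case (Suc j)
    then have "(par ^^ j) b = t" using k par_a by (simp only: funpow_Suc_right o_apply)
    then show ?thesis using b unfolding descendants_def by blast
  qed (use k in simp)
qed

lemma walk_leaving_descendants_meets_root:
  assumes "(a, b) \<in> {(p, q). p \<in> X \<and> q \<in> X \<and> tree_adj par p q}\<^sup>*"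
    and "X \<subseteq> N" and "a \<in> descendants N par t" and "b \<notin> descendants N par t"
  shows "t \<in> X"
  using assms
proof (induction rule: rtrancl_induct)
  case (step m b)
  then have m: "m \<in> X" and b: "b \<in> N" and adj: "tree_adj par m b" by auto
  show ?case
  proof (cases "m \<in> descendants N par t")
    case True
    then have "m = t" using tree_adj_leaving_descendants[OF adj _ b step.prems(3)] by simp
    then show ?thesis using m by simp
  next
    case False
    then show ?thesis using step.IH step.prems(1,2) by simp
  qed
qed simp

lemma tree_decomposition_bag_separates_subtree:
  assumes td: "tree_decomposition V E N r par \<beta>" and v: "v \<in> V"
    and a: "a \<in> descendants N par t" "v \<in> \<beta> a"
    and b: "b \<in> N" "b \<notin> descendants N par t" "v \<in> \<beta> b"
  shows "v \<in> \<beta> t"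
proof -
  let ?X = "{s \<in> N. v \<in> \<beta> s}"
  have "connected_in_tree par ?X" using td v unfolding tree_decomposition_def by auto
  moreover have "a \<in> N" using a unfolding descendants_def by auto
  ultimately have "(a, b) \<in> {(p, q). p \<in> ?X \<and> q \<in> ?X \<and> tree_adj par p q}\<^sup>*"
    using a b unfolding connected_in_tree_def by auto
  then have "t \<in> ?X" by (rule walk_leaving_descendants_meets_root) (use a b in auto)
  then show ?thesis by simp
qed

lemma derived_bag_subset_gamma:
  assumes "s \<in> N"
  shows "derived_bag W U EB N par \<beta> s \<subseteq> gamma N par \<beta> s"
proof -
  have "\<beta> s \<subseteq> gamma N par \<beta> s"
    using descendants_refl[OF assms] unfolding gamma_def by blast
  then show ?thesis unfolding derived_bag_def by blast
qed

lemma gamma_derived_subset_gamma: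
  "gamma N par (derived_bag W U EB N par \<beta>) t \<subseteq> gamma N par \<beta> t"
proof
  fix x assume "x \<in> gamma N par (derived_bag W U EB N par \<beta>) t"
  then obtain s where s: "s \<in> descendants N par t" "x \<in> derived_bag W U EB N par \<beta> s"
    unfolding gamma_def by auto
  then have "s \<in> N" unfolding descendants_def by auto
  then have "x \<in> gamma N par \<beta> s" using s(2) by (rule derived_bag_subset_gamma[THEN subsetD])
  then obtain s' where s': "s' \<in> descendants N par s" "x \<in> \<beta> s'"
    unfolding gamma_def by auto
  have "s' \<in> descendants N par t" using descendants_trans[OF s(1) s'(1)] .
  then show "x \<in> gamma N par \<beta> t" using s'(2) unfolding gamma_def by auto
qed

lemma gamma_inter_subset_gamma_derived:
  "gamma N par \<beta> t \<inter> W \<subseteq> gamma N par (derived_bag W U EB N par \<beta>) t"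
proof -
  have "\<beta> s \<inter> W \<subseteq> derived_bag W U EB N par \<beta> s" for s
    unfolding derived_bag_def by blast
  then show ?thesis unfolding gamma_def by blast
qed

lemma half_square_edge_common_special_neighbour:
  assumes "bipartite_graph W U EB" and "{x, y} \<in> half_square_edges W EB"
  obtains u where "x \<in> W" "y \<in> W" "u \<in> U" "{x, u} \<in> EB" "{u, y} \<in> EB"
proof -
  obtain a c u where h: "{x, y} = {a, c}" "a \<in> W" "c \<in> W" "{a, u} \<in> EB" "{u, c} \<in> EB"
    using assms(2) unfolding half_square_edges_def by blast
  then have xyu: "x \<in> W" "y \<in> W" "{x, u} \<in> EB" "{u, y} \<in> EB"
    by (auto simp: doubleton_eq_iff insert_commute)
  obtain w u' where "{x, u} = {w, u'}" "w \<in> W" "u' \<in> U"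
    using xyu(3) assms(1) unfolding bipartite_graph_def by blast
  then have "u \<in> U"
    using xyu(1) assms(1) unfolding bipartite_graph_def doubleton_eq_iff by auto
  then show ?thesis using that xyu by blast
qed

theorem lemma16:
  fixes W U :: "'v set" and EB :: "'v set set"
    and VG :: "'v set" and EG :: "'v set set"
    and N :: "'n set" and r :: 'n and par :: "'n \<Rightarrow> 'n" and \<beta> :: "'n \<Rightarrow> 'v set"
  assumes B_bip: "bipartite_graph W U EB"
    and B_planar: "planar_graph (W \<union> U) EB"
    and G_V: "VG = W"
    and G_E: "EG = half_square_edges W EB"
    and nice: "nice_tree_decomposition (W \<union> U) EB N r par \<beta>"
    and t: "t \<in> N"
    and e: "{x, y} \<in> EG"
    and x: "x \<in> gamma N par (derived_bag W U EB N par \<beta>) t"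
    and y: "y \<in> VG - gamma N par (derived_bag W U EB N par \<beta>) t"
  shows "(x \<in> Original W U EB N par \<beta> t \<or> y \<in> Original W U EB N par \<beta> t) \<or>
         (\<exists>K\<in>Cliques U EB \<beta> t. {x, y} \<in> clique_edges EG K)"
proof -
  have td: "tree_decomposition (W \<union> U) EB N r par \<beta>"
    using nice unfolding nice_tree_decomposition_def by auto
  obtain u where xW: "x \<in> W" and uU: "u \<in> U" and xu: "{x, u} \<in> EB" and uy: "{u, y} \<in> EB"
    by (rule half_square_edge_common_special_neighbour[OF B_bip e[unfolded G_E]])
  have "x \<in> gamma N par \<beta> t" using x by (rule gamma_derived_subset_gamma[THEN subsetD])
  then obtain d where d: "d \<in> descendants N par t" "x \<in> \<beta> d" unfolding gamma_def by auto
  have y_outside: "y \<notin> gamma N par \<beta> t"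
  proof
    assume "y \<in> gamma N par \<beta> t"
    then have "y \<in> gamma N par (derived_bag W U EB N par \<beta>) t"
      using y G_V by (intro gamma_inter_subset_gamma_derived[THEN subsetD]) auto
    then show False using y by simp
  qed
  obtain b where "b \<in> N" "{u, y} \<subseteq> \<beta> b"
    using td uy unfolding tree_decomposition_def by blast
  then have b: "b \<in> N" "b \<notin> descendants N par t" "u \<in> \<beta> b"
    using y_outside unfolding gamma_def by auto
  show ?thesis
  proof (cases "u \<in> gamma N par \<beta> t")
    case True
    then obtain d' where "d' \<in> descendants N par t" "u \<in> \<beta> d'" unfolding gamma_def by auto
    then have "u \<in> \<beta> t" using uU by (intro tree_decomposition_bag_separates_subtree[OF td _ _ _ b]) auto
    then have "nbhd EB u \<in> Cliques U EB \<beta> t" using uU unfolding Cliques_def by auto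
    moreover have "{x, y} \<in> clique_edges EG (nbhd EB u)"
      using e xu uy unfolding clique_edges_def nbhd_def by (auto simp: insert_commute)
    ultimately show ?thesis by blast
  next
    case False
    obtain b' where "b' \<in> N" "{x, u} \<subseteq> \<beta> b'"
      using td xu unfolding tree_decomposition_def by blast
    then have b': "b' \<in> N" "b' \<notin> descendants N par t" "x \<in> \<beta> b'"
      using False unfolding gamma_def by auto
    have "x \<in> \<beta> t" using xW by (intro tree_decomposition_bag_separates_subtree[OF td _ d b']) auto
    then have "x \<in> Original W U EB N par \<beta> t"
      using xW unfolding Original_def derived_bag_def by auto
    then show ?thesis by simp
  qed
qed

end
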